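(* The following hold in $VSPG_n$, with all indices distinct elements of $\{1,\dots,n\}$: (i) If $\max\{i,j\}<\max\{k,l\}$, then $\alpha^{\beta}=\alpha^{\beta^{-1}}=\alpha$ for $\alpha\in\{\mu_{kl},\gamma_{kl}\}$, $\beta\in\{\mu_{ij},\gamma_{ij}\}$. In (ii)–(v) assume $k>\max\{i,j\}$. (ii) $\mu_{ik}^{\mu_{ij}}=\mu_{kj}^{\mu_{ij}}\mu_{ik}\mu_{kj}^{-1}$; $\mu_{ik}^{\mu_{ij}^{-1}}=\mu_{kj}^{-1}\mu_{ik}\mu_{kj}^{\mu_{ij}^{-1}}$; $\mu_{ik}^{\gamma_{ij}}=\gamma_{jk}^{-\gamma_{ij}}\mu_{kj}^{-\gamma_{ij}}\gamma_{kj}^{\gamma_{ij}}\mu_{ik}\mu_{jk}$; $\mu_{ik}^{\bar\gamma_{ij}}=\mu_{jk}\mu_{ik}\gamma_{jk}^{-\bar\gamma_{ij}}\mu_{kj}^{-\bar\gamma_{ij}}\gamma_{kj}^{\bar\gamma_{ij}}$; $\gamma_{ik}^{\mu_{ij}}=\mu_{kj}^{\mu_{ij}}\gamma_{ik}\mu_{kj}^{-1}$; $\gamma_{ik}^{\mu_{ij}^{-1}}=\mu_{kj}^{-1}\gamma_{ik}\mu_{kj}^{\mu_{ij}^{-1}}$. (iii) $\mu_{ki}^{\mu_{ij}}=\mu_{kj}\mu_{ki}\mu_{kj}^{-\mu_{ij}}$; $\mu_{ki}^{\mu_{ij}^{-1}}=\mu_{kj}^{-\mu_{ij}^{-1}}\mu_{ki}\mu_{kj}$;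 $\mu_{ki}^{\gamma_{ij}}=\mu_{kj}\mu_{ki}\mu_{kj}^{-\gamma_{ij}}$; $\mu_{ki}^{\bar\gamma_{ij}}=\mu_{kj}^{-\bar\gamma_{ij}}\mu_{ki}\mu_{kj}$; $\gamma_{ki}^{\mu_{ij}}=\mu_{kj}\gamma_{ki}\mu_{kj}^{-\mu_{ij}}$; $\gamma_{ki}^{\mu_{ij}^{-1}}=\mu_{kj}^{-\mu_{ij}^{-1}}\gamma_{ki}\mu_{kj}$. (iv) $\mu_{jk}^{\mu_{ij}}=\mu_{ik}\mu_{jk}\mu_{kj}\mu_{ik}^{-1}\mu_{kj}^{-\mu_{ij}}$; $\mu_{jk}^{\mu_{ij}^{-1}}=\mu_{kj}^{-\mu_{ij}^{-1}}\mu_{ik}^{-1}\mu_{kj}\mu_{jk}\mu_{ik}$; $\mu_{jk}^{\gamma_{ij}}=\gamma_{jk}^{\gamma_{ij}}\mu_{kj}^{\gamma_{ij}}\gamma_{kj}^{-\gamma_{ij}}$; $\mu_{jk}^{\bar\gamma_{ij}}=\gamma_{jk}^{\bar\gamma_{ij}}\mu_{kj}^{\bar\gamma_{ij}}\gamma_{kj}^{-\bar\gamma_{ij}}$; $\gamma_{jk}^{\mu_{ij}}=\mu_{ik}\gamma_{jk}\mu_{kj}\mu_{ik}^{-1}\mu_{kj}^{-\mu_{ij}}$; $\gamma_{jk}^{\mu_{ij}^{-1}}=\mu_{kj}^{-\mu_{ij}^{-1}}\mu_{ik}^{-1}\mu_{kj}\gamma_{jk}\mu_{ik}$. (v) $\gamma_{kj}^{\mu_{ij}}=\mu_{kj}^{\mu_{ij}}\mu_{ik}\mu_{kj}^{-1}\gamma_{kj}\mu_{ik}^{-1}$;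 $\gamma_{kj}^{\mu_{ij}^{-1}}=\mu_{ik}^{-1}\gamma_{kj}\mu_{kj}^{-1}\mu_{ik}\mu_{kj}^{\mu_{ij}^{-1}}$.
   Context: $VSPG_n$ is the group generated by $\{\mu_{ij},\gamma_{ij}\mid 1\le i\ne j\le n\}$ with defining relations (distinct letters denote distinct indices): $\mu_{ij}\mu_{ik}\mu_{jk}=\mu_{jk}\mu_{ik}\mu_{ij}$; $\mu_{ij}\mu_{ik}\gamma_{jk}=\gamma_{jk}\mu_{ik}\mu_{ij}$; $\gamma_{ij}\mu_{ik}\mu_{jk}=\mu_{jk}\mu_{ik}\gamma_{ij}$; $\mu_{ij}\gamma_{ji}=\gamma_{ij}\mu_{ji}$; $\mu_{ij}\mu_{kl}=\mu_{kl}\mu_{ij}$, $\gamma_{ij}\gamma_{kl}=\gamma_{kl}\gamma_{ij}$, $\mu_{ij}\gamma_{kl}=\gamma_{kl}\mu_{ij}$. (It is the kernel of the permutation homomorphism on the virtual singular braid group $VSG_n$, and $\mu_{ij},\gamma_{ij}$ are the generalized fusing strings.) Notation: $\bar\gamma_{ij}:=\gamma_{ij}^{-1}$; $a^b:=b^{-1}ab$; $a^{-b}:=(a^{-1})^b$. *)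

theory Defs
  imports Main
begin

datatype gen = M nat nat | G nat nat

text \<open>Words in the free group: letters are (sign, generator), True = positive exponent.\<close>
type_synonym word = "(bool \<times> gen) list"

definition idx :: "nat \<Rightarrow> nat \<Rightarrow> bool" where
  "idx n i \<longleftrightarrow> 1 \<le> i \<and> i \<le> n"

definition mu :: "nat \<Rightarrow> nat \<Rightarrow> word" where "mu i j = [(True, M i j)]"
definition ga :: "nat \<Rightarrow> nat \<Rightarrow> word" where "ga i j = [(True, G i j)]"

definition iw :: "word \<Rightarrow> word" where
  "iw w = rev (map (\<lambda>(b, x). (\<not> b, x)) w)"

definition cj :: "word \<Rightarrow> word \<Rightarrow> word" where
  "cj a b = iw b @ a @ b"

inductive veq :: "nat \<Rightarrow> word \<Rightarrow> word \<Rightarrow> bool" for n where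
  refl: "veq n u u"
| sym: "veq n u v \<Longrightarrow> veq n v u"
| trans: "veq n u v \<Longrightarrow> veq n v w \<Longrightarrow> veq n u w"
| cong: "veq n u v \<Longrightarrow> veq n (a @ u @ b) (a @ v @ b)"
| cancel: "veq n [(b, x), (\<not> b, x)] []"
| r1: "idx n i \<Longrightarrow> idx n j \<Longrightarrow> idx n k \<Longrightarrow> distinct [i, j, k] \<Longrightarrow>
     veq n (mu i j @ mu i k @ mu j k) (mu j k @ mu i k @ mu i j)"
| r2: "idx n i \<Longrightarrow> idx n j \<Longrightarrow> idx n k \<Longrightarrow> distinct [i, j, k] \<Longrightarrow>
     veq n (mu i j @ mu i k @ ga j k) (ga j k @ mu i k @ mu i j)"
| r3: "idx n i \<Longrightarrow> idx n j \<Longrightarrow> idx n k \<Longrightarrow> distinct [i, j, k] \<Longrightarrow>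
     veq n (ga i j @ mu i k @ mu j k) (mu j k @ mu i k @ ga i j)"
| r4: "idx n i \<Longrightarrow> idx n j \<Longrightarrow> i \<noteq> j \<Longrightarrow>
     veq n (mu i j @ ga j i) (ga i j @ mu j i)"
| r5: "idx n i \<Longrightarrow> idx n j \<Longrightarrow> idx n k \<Longrightarrow> idx n l \<Longrightarrow> distinct [i, j, k, l] \<Longrightarrow>
     veq n (mu i j @ mu k l) (mu k l @ mu i j)"
| r6: "idx n i \<Longrightarrow> idx n j \<Longrightarrow> idx n k \<Longrightarrow> idx n l \<Longrightarrow> distinct [i, j, k, l] \<Longrightarrow>
     veq n (ga i j @ ga k l) (ga k l @ ga i j)"
| r7: "idx n i \<Longrightarrow> idx n j \<Longrightarrow> idx n k \<Longrightarrow> idx n l \<Longrightarrow> distinct [i, j, k, l] \<Longrightarrow>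
     veq n (mu i j @ ga k l) (ga k l @ mu i j)"

end

theory Submission
  imports Defs
begin

text \<open>Generators with disjoint index pairs commute, hence conjugation by them or their inverses
  is trivial; this is (i). Each identity of (ii)--(v) is one or two defining relations applied inside
  a word, up to free cancellation, which for concrete words is decided by computing reduced forms.\<close>

lemma veq_append: "veq n u u' \<Longrightarrow> veq n v v' \<Longrightarrow> veq n (u @ v) (u' @ v')"
  using veq.cong[of n u u' "[]" v] veq.cong[of n v v' u' "[]"] by (auto intro: veq.trans)

fun free_reduce :: "word \<Rightarrow> word" where
  "free_reduce [] = []"
| "free_reduce (c # w) = (case free_reduce w of [] \<Rightarrow> [c]
      | d # w' \<Rightarrow> (if d = (\<not> fst c, snd c) then w' else c # d # w'))"

lemma veq_cancel_prefix: "veq n ((b, x) # (\<not> b, x) # w) w"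
  using veq_append[OF veq.cancel veq.refl, of n b x w] by simp

lemma veq_free_reduce: "veq n w (free_reduce w)"
proof (induction w)
  case Nil
  then show ?case by (simp add: veq.refl)
next
  case (Cons c w)
  have reduce_tail: "veq n (c # w) (c # free_reduce w)"
    using veq_append[OF veq.refl[of n "[c]"] Cons.IH] by simp
  show ?case
  proof (cases "free_reduce w")
    case (Cons d w')
    moreover obtain b x where "c = (b, x)" by (cases c)
    ultimately show ?thesis
      using reduce_tail veq_cancel_prefix[of n b x w'] by (auto intro: veq.trans)
  qed (use reduce_tail in simp)
qed

lemma veq_relator_in_context:
  assumes "veq n L R"
    and "free_reduce (p @ L @ q) = free_reduce x"
    and "free_reduce (p @ R @ q) = free_reduce y"
  shows "veq n x y"
proof -
  have "veq n (p @ L @ q) (p @ R @ q)" using assms(1) by (rule veq.cong)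
  then show ?thesis
    using assms(2,3) veq_free_reduce[of n x] veq_free_reduce[of n y]
      veq_free_reduce[of n "p @ L @ q"] veq_free_reduce[of n "p @ R @ q"]
    by (metis veq.sym veq.trans)
qed

lemma iw_iw [simp]: "iw (iw w) = w"
  by (induction w) (auto simp: iw_def)

lemma veq_iw_append_cancel: "veq n (iw w @ w @ v) v"
proof (induction w arbitrary: v)
  case Nil
  then show ?case by (simp add: iw_def veq.refl)
next
  case (Cons c w)
  obtain b x where c: "c = (b, x)" by (cases c)
  have "veq n (iw w @ ((\<not> b, x) # (\<not> \<not> b, x) # w @ v) @ []) (iw w @ (w @ v) @ [])"
    by (rule veq.cong[OF veq_cancel_prefix])
  then show ?case using Cons.IH[of v] c by (auto simp: iw_def intro: veq.trans)
qed

lemma veq_append_iw_cancel: "veq n (w @ iw w @ v) v"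
  using veq_iw_append_cancel[of n "iw w" v] by simp

lemma cj_veq_if_commute:
  assumes "veq n (b @ a) (a @ b)"
  shows "veq n (cj a b) a" and "veq n (cj a (iw b)) a"
proof -
  have "veq n (iw b @ (b @ a) @ []) (iw b @ (a @ b) @ [])" using assms by (rule veq.cong)
  then show "veq n (cj a b) a"
    using veq_iw_append_cancel[of n b a] by (auto simp: cj_def intro: veq.sym veq.trans)
  have "veq n ([] @ (b @ a) @ iw b) ([] @ (a @ b) @ iw b)" using assms by (rule veq.cong)
  moreover have "veq n (a @ (b @ iw b @ []) @ []) (a @ [] @ [])"
    by (rule veq.cong[OF veq_append_iw_cancel])
  ultimately show "veq n (cj a (iw b)) a" by (auto simp: cj_def intro: veq.trans)
qed

lemma cj_disjoint_generators:
  assumes "idx n i" "idx n j" "idx n k" "idx n l" "distinct [i, j, k, l]"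
  shows "\<forall>\<alpha>\<in>{mu k l, ga k l}. \<forall>\<beta>\<in>{mu i j, ga i j}.
           veq n (cj \<alpha> \<beta>) \<alpha> \<and> veq n (cj \<alpha> (iw \<beta>)) \<alpha>"
proof -
  have "veq n (mu i j @ mu k l) (mu k l @ mu i j)" "veq n (ga i j @ ga k l) (ga k l @ ga i j)"
    "veq n (mu i j @ ga k l) (ga k l @ mu i j)" "veq n (ga i j @ mu k l) (mu k l @ ga i j)"
    using assms by (auto intro: veq.r5 veq.r6 veq.r7 veq.sym[OF veq.r7])
  then show ?thesis using cj_veq_if_commute by blast
qed

lemmas word_defs = mu_def ga_def iw_def cj_def

context
  fixes n i j k :: nat
  assumes indices: "idx n i" "idx n j" "idx n k" "distinct [i, j, k]"
begin

lemma cj_mu_ik_mu_ij: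
  "veq n (cj (mu i k) (mu i j))
     (cj (mu k j) (mu i j) @ mu i k @ iw (mu k j))"
  by (rule veq_relator_in_context[OF veq.r1[of n i k j],
        where p = "iw (mu i j)" and q = "iw (mu k j)"])
    (use indices in \<open>simp_all add: word_defs\<close>)

lemma cj_mu_ik_mu_ij_inv:
  "veq n (cj (mu i k) (iw (mu i j)))
     (iw (mu k j) @ mu i k @ cj (mu k j) (iw (mu i j)))"
  by (rule veq_relator_in_context[OF veq.sym[OF veq.r1[of n i k j]],
        where p = "iw (mu k j)" and q = "iw (mu i j)"])
    (use indices in \<open>simp_all add: word_defs\<close>)

lemma cj_mu_ik_ga_ij:
  "veq n (cj (mu i k) (ga i j))
     (cj (iw (ga j k)) (ga i j) @ cj (iw (mu k j)) (ga i j) @ cj (ga k j) (ga i j) @ mu i k @ mu j k)"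
proof (rule veq.trans)
  show "veq n (cj (mu i k) (ga i j))
      (iw (ga i j) @ iw (mu j k) @ ga i j @ mu i k @ mu j k)"
    by (rule veq_relator_in_context[OF veq.sym[OF veq.r3[of n i j k]],
          where p = "iw (ga i j) @ iw (mu j k)" and q = "[]"])
      (use indices in \<open>simp_all add: word_defs\<close>)
  show "veq n (iw (ga i j) @ iw (mu j k) @ ga i j @ mu i k @ mu j k)
      (cj (iw (ga j k)) (ga i j) @ cj (iw (mu k j)) (ga i j) @ cj (ga k j) (ga i j) @ mu i k @ mu j k)"
    by (rule veq_relator_in_context[OF veq.r4[of n k j],
          where p = "iw (ga i j) @ iw (ga j k) @ iw (mu k j)"
            and q = "iw (mu j k) @ ga i j @ mu i k @ mu j k"])
      (use indices in \<open>simp_all add: word_defs\<close>)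
qed

lemma cj_mu_ik_ga_ij_inv:
  "veq n (cj (mu i k) (iw (ga i j)))
     (mu j k @ mu i k @ cj (iw (ga j k)) (iw (ga i j)) @ cj (iw (mu k j)) (iw (ga i j)) @ cj (ga k j) (iw (ga i j)))"
proof (rule veq.trans)
  show "veq n (cj (mu i k) (iw (ga i j)))
      (mu j k @ mu i k @ ga i j @ iw (mu j k) @ iw (ga i j))"
    by (rule veq_relator_in_context[OF veq.r3[of n i j k],
          where p = "[]" and q = "iw (mu j k) @ iw (ga i j)"])
      (use indices in \<open>simp_all add: word_defs\<close>)
  show "veq n (mu j k @ mu i k @ ga i j @ iw (mu j k) @ iw (ga i j))
      (mu j k @ mu i k @ cj (iw (ga j k)) (iw (ga i j)) @ cj (iw (mu k j)) (iw (ga i j)) @ cj (ga k j) (iw (ga i j)))"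
    by (rule veq_relator_in_context[OF veq.r4[of n k j],
          where p = "mu j k @ mu i k @ ga i j @ iw (ga j k) @ iw (mu k j)"
            and q = "iw (mu j k) @ iw (ga i j)"])
      (use indices in \<open>simp_all add: word_defs\<close>)
qed

lemma cj_ga_ik_mu_ij:
  "veq n (cj (ga i k) (mu i j))
     (cj (mu k j) (mu i j) @ ga i k @ iw (mu k j))"
  by (rule veq_relator_in_context[OF veq.r3[of n i k j],
        where p = "iw (mu i j)" and q = "iw (mu k j)"])
    (use indices in \<open>simp_all add: word_defs\<close>)

lemma cj_ga_ik_mu_ij_inv:
  "veq n (cj (ga i k) (iw (mu i j)))
     (iw (mu k j) @ ga i k @ cj (mu k j) (iw (mu i j)))"
  by (rule veq_relator_in_context[OF veq.sym[OF veq.r3[of n i k j]],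
        where p = "iw (mu k j)" and q = "iw (mu i j)"])
    (use indices in \<open>simp_all add: word_defs\<close>)

lemma cj_mu_ki_mu_ij:
  "veq n (cj (mu k i) (mu i j))
     (mu k j @ mu k i @ cj (iw (mu k j)) (mu i j))"
  by (rule veq_relator_in_context[OF veq.r1[of n k i j],
        where p = "iw (mu i j)" and q = "iw (mu i j) @ iw (mu k j) @ mu i j"])
    (use indices in \<open>simp_all add: word_defs\<close>)

lemma cj_mu_ki_mu_ij_inv:
  "veq n (cj (mu k i) (iw (mu i j)))
     (cj (iw (mu k j)) (iw (mu i j)) @ mu k i @ mu k j)"
  by (rule veq_relator_in_context[OF veq.sym[OF veq.r1[of n k i j]],
        where p = "mu i j @ iw (mu k j) @ iw (mu i j)" and q = "iw (mu i j)"])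
    (use indices in \<open>simp_all add: word_defs\<close>)

lemma cj_mu_ki_ga_ij:
  "veq n (cj (mu k i) (ga i j))
     (mu k j @ mu k i @ cj (iw (mu k j)) (ga i j))"
  by (rule veq_relator_in_context[OF veq.r2[of n k i j],
        where p = "iw (ga i j)" and q = "iw (ga i j) @ iw (mu k j) @ ga i j"])
    (use indices in \<open>simp_all add: word_defs\<close>)

lemma cj_mu_ki_ga_ij_inv:
  "veq n (cj (mu k i) (iw (ga i j)))
     (cj (iw (mu k j)) (iw (ga i j)) @ mu k i @ mu k j)"
  by (rule veq_relator_in_context[OF veq.sym[OF veq.r2[of n k i j]],
        where p = "ga i j @ iw (mu k j) @ iw (ga i j)" and q = "iw (ga i j)"])
    (use indices in \<open>simp_all add: word_defs\<close>)

lemma cj_ga_ki_mu_ij: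
  "veq n (cj (ga k i) (mu i j))
     (mu k j @ ga k i @ cj (iw (mu k j)) (mu i j))"
  by (rule veq_relator_in_context[OF veq.r3[of n k i j],
        where p = "iw (mu i j)" and q = "iw (mu i j) @ iw (mu k j) @ mu i j"])
    (use indices in \<open>simp_all add: word_defs\<close>)

lemma cj_ga_ki_mu_ij_inv:
  "veq n (cj (ga k i) (iw (mu i j)))
     (cj (iw (mu k j)) (iw (mu i j)) @ ga k i @ mu k j)"
  by (rule veq_relator_in_context[OF veq.sym[OF veq.r3[of n k i j]],
        where p = "mu i j @ iw (mu k j) @ iw (mu i j)" and q = "iw (mu i j)"])
    (use indices in \<open>simp_all add: word_defs\<close>)

lemma cj_mu_jk_mu_ij:
  "veq n (cj (mu j k) (mu i j))
     (mu i k @ mu j k @ mu k j @ iw (mu i k) @ cj (iw (mu k j)) (mu i j))"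
proof (rule veq.trans)
  show "veq n (cj (mu j k) (mu i j))
      (mu i k @ mu j k @ iw (mu i j) @ iw (mu i k) @ mu i j)"
    by (rule veq_relator_in_context[OF veq.sym[OF veq.r1[of n i j k]],
          where p = "iw (mu i j)" and q = "iw (mu i j) @ iw (mu i k) @ mu i j"])
      (use indices in \<open>simp_all add: word_defs\<close>)
  show "veq n (mu i k @ mu j k @ iw (mu i j) @ iw (mu i k) @ mu i j)
      (mu i k @ mu j k @ mu k j @ iw (mu i k) @ cj (iw (mu k j)) (mu i j))"
    by (rule veq_relator_in_context[OF veq.sym[OF veq.r1[of n i k j]],
          where p = "mu i k @ mu j k @ mu k j @ iw (mu k j @ mu i j @ mu i k)"
            and q = "iw (mu i k @ mu i j @ mu k j) @ mu i j"])
      (use indices in \<open>simp_all add: word_defs\<close>)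
qed

lemma cj_mu_jk_mu_ij_inv:
  "veq n (cj (mu j k) (iw (mu i j)))
     (cj (iw (mu k j)) (iw (mu i j)) @ iw (mu i k) @ mu k j @ mu j k @ mu i k)"
proof (rule veq.trans)
  show "veq n (cj (mu j k) (iw (mu i j)))
      (mu i j @ iw (mu i k) @ iw (mu i j) @ mu j k @ mu i k)"
    by (rule veq_relator_in_context[OF veq.r1[of n i j k],
          where p = "mu i j @ iw (mu i k) @ iw (mu i j)" and q = "iw (mu i j)"])
      (use indices in \<open>simp_all add: word_defs\<close>)
  show "veq n (mu i j @ iw (mu i k) @ iw (mu i j) @ mu j k @ mu i k)
      (cj (iw (mu k j)) (iw (mu i j)) @ iw (mu i k) @ mu k j @ mu j k @ mu i k)"
    by (rule veq_relator_in_context[OF veq.r1[of n i k j],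
          where p = "mu i j @ iw (mu i k @ mu i j @ mu k j)"
            and q = "iw (mu k j @ mu i j @ mu i k) @ mu k j @ mu j k @ mu i k"])
      (use indices in \<open>simp_all add: word_defs\<close>)
qed

lemma cj_mu_jk_ga_ij:
  "veq n (cj (mu j k) (ga i j))
     (cj (ga j k) (ga i j) @ cj (mu k j) (ga i j) @ cj (iw (ga k j)) (ga i j))"
  by (rule veq_relator_in_context[OF veq.r4[of n j k],
        where p = "iw (ga i j)" and q = "iw (ga k j) @ ga i j"])
    (use indices in \<open>simp_all add: word_defs\<close>)

lemma cj_mu_jk_ga_ij_inv:
  "veq n (cj (mu j k) (iw (ga i j)))
     (cj (ga j k) (iw (ga i j)) @ cj (mu k j) (iw (ga i j)) @ cj (iw (ga k j)) (iw (ga i j)))"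
  by (rule veq_relator_in_context[OF veq.r4[of n j k],
        where p = "ga i j" and q = "iw (ga k j) @ iw (ga i j)"])
    (use indices in \<open>simp_all add: word_defs\<close>)

lemma cj_ga_jk_mu_ij:
  "veq n (cj (ga j k) (mu i j))
     (mu i k @ ga j k @ mu k j @ iw (mu i k) @ cj (iw (mu k j)) (mu i j))"
proof (rule veq.trans)
  show "veq n (cj (ga j k) (mu i j))
      (mu i k @ ga j k @ iw (mu i j) @ iw (mu i k) @ mu i j)"
    by (rule veq_relator_in_context[OF veq.sym[OF veq.r2[of n i j k]],
          where p = "iw (mu i j)" and q = "iw (mu i j) @ iw (mu i k) @ mu i j"])
      (use indices in \<open>simp_all add: word_defs\<close>)
  show "veq n (mu i k @ ga j k @ iw (mu i j) @ iw (mu i k) @ mu i j)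
      (mu i k @ ga j k @ mu k j @ iw (mu i k) @ cj (iw (mu k j)) (mu i j))"
    by (rule veq_relator_in_context[OF veq.sym[OF veq.r1[of n i k j]],
          where p = "mu i k @ ga j k @ mu k j @ iw (mu k j @ mu i j @ mu i k)"
            and q = "iw (mu i k @ mu i j @ mu k j) @ mu i j"])
      (use indices in \<open>simp_all add: word_defs\<close>)
qed

lemma cj_ga_jk_mu_ij_inv:
  "veq n (cj (ga j k) (iw (mu i j)))
     (cj (iw (mu k j)) (iw (mu i j)) @ iw (mu i k) @ mu k j @ ga j k @ mu i k)"
proof (rule veq.trans)
  show "veq n (cj (ga j k) (iw (mu i j)))
      (mu i j @ iw (mu i k) @ iw (mu i j) @ ga j k @ mu i k)"
    by (rule veq_relator_in_context[OF veq.r2[of n i j k],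
          where p = "mu i j @ iw (mu i k) @ iw (mu i j)" and q = "iw (mu i j)"])
      (use indices in \<open>simp_all add: word_defs\<close>)
  show "veq n (mu i j @ iw (mu i k) @ iw (mu i j) @ ga j k @ mu i k)
      (cj (iw (mu k j)) (iw (mu i j)) @ iw (mu i k) @ mu k j @ ga j k @ mu i k)"
    by (rule veq_relator_in_context[OF veq.r1[of n i k j],
          where p = "mu i j @ iw (mu i k @ mu i j @ mu k j)"
            and q = "iw (mu k j @ mu i j @ mu i k) @ mu k j @ ga j k @ mu i k"])
      (use indices in \<open>simp_all add: word_defs\<close>)
qed

lemma cj_ga_kj_mu_ij:
  "veq n (cj (ga k j) (mu i j))
     (cj (mu k j) (mu i j) @ mu i k @ iw (mu k j) @ ga k j @ iw (mu i k))"
proof (rule veq.trans)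
  show "veq n (cj (ga k j) (mu i j))
      (iw (mu i j) @ mu i k @ mu i j @ ga k j @ iw (mu i k))"
    by (rule veq_relator_in_context[OF veq.sym[OF veq.r2[of n i k j]],
          where p = "iw (mu i j)" and q = "iw (mu i k)"])
      (use indices in \<open>simp_all add: word_defs\<close>)
  show "veq n (iw (mu i j) @ mu i k @ mu i j @ ga k j @ iw (mu i k))
      (cj (mu k j) (mu i j) @ mu i k @ iw (mu k j) @ ga k j @ iw (mu i k))"
    by (rule veq_relator_in_context[OF veq.r1[of n i k j],
          where p = "iw (mu i j)" and q = "iw (mu k j) @ ga k j @ iw (mu i k)"])
      (use indices in \<open>simp_all add: word_defs\<close>)
qed

lemma cj_ga_kj_mu_ij_inv:
  "veq n (cj (ga k j) (iw (mu i j)))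
     (iw (mu i k) @ ga k j @ iw (mu k j) @ mu i k @ cj (mu k j) (iw (mu i j)))"
proof (rule veq.trans)
  show "veq n (cj (ga k j) (iw (mu i j)))
      (iw (mu i k) @ ga k j @ mu i j @ mu i k @ iw (mu i j))"
    by (rule veq_relator_in_context[OF veq.r2[of n i k j],
          where p = "iw (mu i k)" and q = "iw (mu i j)"])
      (use indices in \<open>simp_all add: word_defs\<close>)
  show "veq n (iw (mu i k) @ ga k j @ mu i j @ mu i k @ iw (mu i j))
      (iw (mu i k) @ ga k j @ iw (mu k j) @ mu i k @ cj (mu k j) (iw (mu i j)))"
    by (rule veq_relator_in_context[OF veq.sym[OF veq.r1[of n i k j]],
          where p = "iw (mu i k) @ ga k j @ iw (mu k j)" and q = "iw (mu i j)"])
      (use indices in \<open>simp_all add: word_defs\<close>)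
qed

lemmas cj_fusing_strings =
  cj_mu_ik_mu_ij cj_mu_ik_mu_ij_inv cj_mu_ik_ga_ij cj_mu_ik_ga_ij_inv cj_ga_ik_mu_ij cj_ga_ik_mu_ij_inv
  cj_mu_ki_mu_ij cj_mu_ki_mu_ij_inv cj_mu_ki_ga_ij cj_mu_ki_ga_ij_inv cj_ga_ki_mu_ij cj_ga_ki_mu_ij_inv
  cj_mu_jk_mu_ij cj_mu_jk_mu_ij_inv cj_mu_jk_ga_ij cj_mu_jk_ga_ij_inv cj_ga_jk_mu_ij cj_ga_jk_mu_ij_inv
  cj_ga_kj_mu_ij cj_ga_kj_mu_ij_inv

end

theorem mainTheorem8:
  fixes n i j k l :: nat
  shows
  "(idx n i \<and> idx n j \<and> idx n k \<and> idx n l \<and> distinct [i, j, k, l] \<and> max i j < max k l \<longrightarrow>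
     (\<forall>\<alpha>\<in>{mu k l, ga k l}. \<forall>\<beta>\<in>{mu i j, ga i j}.
        veq n (cj \<alpha> \<beta>) \<alpha> \<and> veq n (cj \<alpha> (iw \<beta>)) \<alpha>))
   \<and>
   (idx n i \<and> idx n j \<and> idx n k \<and> distinct [i, j, k] \<and> max i j < k \<longrightarrow>
     \<comment> \<open>(ii)\<close>
     veq n (cj (mu i k) (mu i j)) (cj (mu k j) (mu i j) @ mu i k @ iw (mu k j)) \<and>
     veq n (cj (mu i k) (iw (mu i j))) (iw (mu k j) @ mu i k @ cj (mu k j) (iw (mu i j))) \<and>
     veq n (cj (mu i k) (ga i j))
       (cj (iw (ga j k)) (ga i j) @ cj (iw (mu k j)) (ga i j) @ cj (ga k j) (ga i j) @ mu i k @ mu j k) \<and>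
     veq n (cj (mu i k) (iw (ga i j)))
       (mu j k @ mu i k @ cj (iw (ga j k)) (iw (ga i j)) @ cj (iw (mu k j)) (iw (ga i j)) @ cj (ga k j) (iw (ga i j))) \<and>
     veq n (cj (ga i k) (mu i j)) (cj (mu k j) (mu i j) @ ga i k @ iw (mu k j)) \<and>
     veq n (cj (ga i k) (iw (mu i j))) (iw (mu k j) @ ga i k @ cj (mu k j) (iw (mu i j))) \<and>
     \<comment> \<open>(iii)\<close>
     veq n (cj (mu k i) (mu i j)) (mu k j @ mu k i @ cj (iw (mu k j)) (mu i j)) \<and>
     veq n (cj (mu k i) (iw (mu i j))) (cj (iw (mu k j)) (iw (mu i j)) @ mu k i @ mu k j) \<and>
     veq n (cj (mu k i) (ga i j)) (mu k j @ mu k i @ cj (iw (mu k j)) (ga i j)) \<and>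
     veq n (cj (mu k i) (iw (ga i j))) (cj (iw (mu k j)) (iw (ga i j)) @ mu k i @ mu k j) \<and>
     veq n (cj (ga k i) (mu i j)) (mu k j @ ga k i @ cj (iw (mu k j)) (mu i j)) \<and>
     veq n (cj (ga k i) (iw (mu i j))) (cj (iw (mu k j)) (iw (mu i j)) @ ga k i @ mu k j) \<and>
     \<comment> \<open>(iv)\<close>
     veq n (cj (mu j k) (mu i j))
       (mu i k @ mu j k @ mu k j @ iw (mu i k) @ cj (iw (mu k j)) (mu i j)) \<and>
     veq n (cj (mu j k) (iw (mu i j)))
       (cj (iw (mu k j)) (iw (mu i j)) @ iw (mu i k) @ mu k j @ mu j k @ mu i k) \<and>
     veq n (cj (mu j k) (ga i j))
       (cj (ga j k) (ga i j) @ cj (mu k j) (ga i j) @ cj (iw (ga k j)) (ga i j)) \<and>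
     veq n (cj (mu j k) (iw (ga i j)))
       (cj (ga j k) (iw (ga i j)) @ cj (mu k j) (iw (ga i j)) @ cj (iw (ga k j)) (iw (ga i j))) \<and>
     veq n (cj (ga j k) (mu i j))
       (mu i k @ ga j k @ mu k j @ iw (mu i k) @ cj (iw (mu k j)) (mu i j)) \<and>
     veq n (cj (ga j k) (iw (mu i j)))
       (cj (iw (mu k j)) (iw (mu i j)) @ iw (mu i k) @ mu k j @ ga j k @ mu i k) \<and>
     \<comment> \<open>(v)\<close>
     veq n (cj (ga k j) (mu i j))
       (cj (mu k j) (mu i j) @ mu i k @ iw (mu k j) @ ga k j @ iw (mu i k)) \<and>
     veq n (cj (ga k j) (iw (mu i j)))
       (iw (mu i k) @ ga k j @ iw (mu k j) @ mu i k @ cj (mu k j) (iw (mu i j))))"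
  using cj_disjoint_generators[of n i j k l] cj_fusing_strings[of n i j k] by auto

end
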